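(* Suppose the joint density of the type satisfies $g(v,k)=g_v(v)g_k(k)$ for all $(v,k)$, and let $p^*$ be any maximizer of $p\,(1-G_v(p))$ over $p\in[0,1]$. Then the mechanism $(f,p)$ with $(f(v,k),p(v,k))=(k,1,p^* )$ if $v\ge p^*$ and $(f(v,k),p(v,k))=(0,0,0)$ otherwise is optimal, i.e., it is incentive compatible and individually rational and its expected revenue $\int_{V\times K}p\,dG$ is at least that of every other incentive compatible and individually rational mechanism.
   Context: A seller has one unit each of two divisible goods. An agent has private type $(v,k)\in V\times K$, $V=[0,1]$, $K=(0,1]$, and from an outcome $(a_1,a_2,t)$ with $a_1,a_2\in[0,1]$ (quantities of good 1 and good 2) and $t\in\mathbb{R}$ (payment by the agent) gets utility $U_{(v,k)}(a_1,a_2,t)=v\min\{a_1/k,a_2\}-t$. A mechanism is a pair $(f,p)$ with $f=(f_1,f_2):V\times K\to[0,1]^2$, $p:V\times K\to\mathbb{R}$. It is incentive compatible if $U_{(v,k)}(f(v,k),p(v,k))\ge U_{(v,k)}(f(v',k'),p(v',k'))$ for all types $(v,k),(v',k')$, and individually rational if $U_{(v,k)}(f(v,k),p(v,k))\ge0$ for all $(v,k)$. The type is distributed according to a joint distribution $G$ with strictly positive density $g$; $g_v,g_k$ are the marginal densities of $v$ and $k$, and $G_v$ is the marginal distribution function of $v$. *)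

theory Defs
  imports "HOL-Analysis.Analysis"
begin

definition types :: "(real \<times> real) set" where
  "types = {0..1} \<times> {0<..1}"

definition util :: "real \<Rightarrow> real \<Rightarrow> real \<Rightarrow> real \<Rightarrow> real \<Rightarrow> real" where
  "util v k a1 a2 t = v * min (a1 / k) a2 - t"

definition feasible :: "(real \<times> real \<Rightarrow> real \<times> real) \<Rightarrow> bool" where
  "feasible f \<longleftrightarrow> (\<forall>x\<in>types. f x \<in> {0..1} \<times> {0..1})"

definition IC :: "(real \<times> real \<Rightarrow> real \<times> real) \<Rightarrow> (real \<times> real \<Rightarrow> real) \<Rightarrow> bool" where
  "IC f p \<longleftrightarrow> (\<forall>(v,k)\<in>types. \<forall>(v',k')\<in>types.
      util v k (fst (f (v,k))) (snd (f (v,k))) (p (v,k))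
        \<ge> util v k (fst (f (v',k'))) (snd (f (v',k'))) (p (v',k')))"

definition IR :: "(real \<times> real \<Rightarrow> real \<times> real) \<Rightarrow> (real \<times> real \<Rightarrow> real) \<Rightarrow> bool" where
  "IR f p \<longleftrightarrow> (\<forall>(v,k)\<in>types. util v k (fst (f (v,k))) (snd (f (v,k))) (p (v,k)) \<ge> 0)"

definition marg_v :: "(real \<times> real \<Rightarrow> real) \<Rightarrow> real \<Rightarrow> real" where
  "marg_v g v = (LINT k:{0<..1}|lborel. g (v,k))"

definition marg_k :: "(real \<times> real \<Rightarrow> real) \<Rightarrow> real \<Rightarrow> real" where
  "marg_k g k = (LINT v:{0..1}|lborel. g (v,k))"

definition cdf_v :: "(real \<times> real \<Rightarrow> real) \<Rightarrow> real \<Rightarrow> real" where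
  "cdf_v g q = (LINT v:{0..q}|lborel. marg_v g v)"

definition revenue :: "(real \<times> real \<Rightarrow> real) \<Rightarrow> (real \<times> real \<Rightarrow> real) \<Rightarrow> real" where
  "revenue g p = (LINT x:types|lborel. p x * g x)"

end

(*
  For fixed k the agent only cares about the quantity min (a1/k) a2 in [0,1], so an IC and
  IR mechanism restricted to the slice v |-> (v,k) is a one-dimensional IC and IR mechanism
  (q, p).  Against any density h on [0,1] such a mechanism earns at most max_r r * (1 - H r):
  quantize q into n layers of height 1/n; up to 1/n, the payment is at most what one collects
  by selling each layer at the lowest type receiving it, and each of these posted prices earns
  at most max_r r * (1 - H r).  When g (v,k) = g_v v * g_k k this bound holds on every slice
  with h = g_v, so by Fubini no mechanism earns more than pstar * (1 - G_v pstar), which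
  selling the bundle (k,1) at price pstar achieves.
*)
theory Submission
  imports Defs
begin

lemma le_zero_if_le_const_over_nat:
  fixes x c :: real
  assumes "\<And>n. n > 0 \<Longrightarrow> x \<le> c / real n"
  shows "x \<le> 0"
proof (rule LIMSEQ_le[OF tendsto_const lim_const_over_n])
  show "\<exists>N. \<forall>n\<ge>N. x \<le> c / real n"
    using assms by (intro exI[of _ 1]) auto
qed

lemma le_left_endpoint_if_increments_le:
  fixes D q :: "real \<Rightarrow> real" and a b C :: real
  assumes "a \<le> b"
    and q_bounded: "\<And>x. x \<in> {a..b} \<Longrightarrow> \<bar>q x\<bar> \<le> C"
    and increment: "\<And>x y. x \<in> {a..b} \<Longrightarrow> y \<in> {a..b} \<Longrightarrow> x \<le> y \<Longrightarrow>
      D y - D x \<le> (y - x) * (q y - q x)"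
  shows "D b \<le> D a"
proof -
  have "D b - D a \<le> (b - a) * (2 * C) / real m" if "m > 0" for m :: nat
  proof -
    define x where "x i = a + real i * (b - a) / real m" for i :: nat
    have x_in: "x i \<in> {a..b}" if "i \<le> m" for i
    proof -
      have "real i * (b - a) \<le> real m * (b - a)"
        using that \<open>a \<le> b\<close> by (intro mult_right_mono) auto
      moreover have "0 \<le> real i * (b - a)" using \<open>a \<le> b\<close> by simp
      ultimately show ?thesis
        using \<open>m > 0\<close> \<open>a \<le> b\<close> by (auto simp: x_def field_simps)
    qed
    have x_step: "x (Suc i) - x i = (b - a) / real m" for i
      by (cases "m = 0") (simp_all add: x_def field_simps)
    have x_ends: "x 0 = a" "x m = b"
      using \<open>m > 0\<close> by (simp_all add: x_def)
    have "D b - D a = (\<Sum>i<m. D (x (Suc i)) - D (x i))"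
      by (simp add: sum_lessThan_telescope[of "\<lambda>i. D (x i)"] x_ends)
    also have "\<dots> \<le> (\<Sum>i<m. (b - a) / real m * (q (x (Suc i)) - q (x i)))"
    proof (rule sum_mono)
      fix i assume "i \<in> {..<m}"
      then have "x i \<in> {a..b}" "x (Suc i) \<in> {a..b}" by (intro x_in; simp)+
      moreover have "x i \<le> x (Suc i)"
        using x_step[of i] \<open>a \<le> b\<close> by (simp add: algebra_simps)
      ultimately show "D (x (Suc i)) - D (x i) \<le> (b - a) / real m * (q (x (Suc i)) - q (x i))"
        using increment[of "x i" "x (Suc i)"] by (simp add: x_step)
    qed
    also have "\<dots> = (b - a) / real m * (q b - q a)"
      by (simp only: sum_distrib_left[symmetric] sum_lessThan_telescope[of "\<lambda>i. q (x i)"] x_ends)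
    also have "\<dots> \<le> (b - a) / real m * (2 * C)"
      using q_bounded[of a] q_bounded[of b] \<open>a \<le> b\<close> by (intro mult_left_mono) auto
    finally show ?thesis by simp
  qed
  then have "D b - D a \<le> 0" by (rule le_zero_if_le_const_over_nat)
  then show ?thesis by simp
qed

lemma sum_level_indicators:
  fixes x :: real and n :: nat
  assumes "0 \<le> x" "x \<le> 1"
  shows "(\<Sum>j=1..n. of_bool (real j / real n \<le> x) :: real) = of_int \<lfloor>real n * x\<rfloor>"
proof (cases "n = 0")
  case False
  define N where "N = nat \<lfloor>real n * x\<rfloor>"
  have "0 \<le> real n * x" using assms by simp
  have level_iff: "real j / real n \<le> x \<longleftrightarrow> j \<le> N" for j
  proof
    assume "real j / real n \<le> x"
    then have "real j \<le> real n * x" using False by (simp add: divide_le_eq mult.commute)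
    then show "j \<le> N" unfolding N_def by (rule le_nat_floor)
  next
    assume "j \<le> N"
    then have "real j \<le> real n * x"
      using of_nat_floor[OF \<open>0 \<le> real n * x\<close>] unfolding N_def by linarith
    then show "real j / real n \<le> x" using False by (simp add: divide_le_eq mult.commute)
  qed
  have "real N \<le> real n * x"
    using level_iff[of N] False by (simp add: divide_le_eq mult.commute)
  also have "\<dots> \<le> real n" using assms by (simp add: mult_left_le)
  finally have "N \<le> n" by simp
  then have "{1..n} \<inter> {j. real j / real n \<le> x} = {1..N}"
    by (auto simp: level_iff)
  then show ?thesis
    using \<open>0 \<le> real n * x\<close> by (simp add: N_def)
qed simp

lemma set_integral_sum:
  fixes f :: "'i \<Rightarrow> 'a \<Rightarrow> 'b::{banach, second_countable_topology}"
  assumes "\<And>i. i \<in> I \<Longrightarrow> set_integrable M A (f i)"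
  shows "set_integrable M A (\<lambda>x. \<Sum>i\<in>I. f i x)"
    and "(LINT x:A|M. \<Sum>i\<in>I. f i x) = (\<Sum>i\<in>I. LINT x:A|M. f i x)"
  using assms unfolding set_integrable_def set_lebesgue_integral_def
  by (simp_all add: scaleR_sum_right integral_sum)

locale ic_ir_mechanism =
  fixes q p :: "real \<Rightarrow> real"
  assumes q_range: "\<And>v. v \<in> {0..1} \<Longrightarrow> q v \<in> {0..1}"
    and ic: "\<And>v w. v \<in> {0..1} \<Longrightarrow> w \<in> {0..1} \<Longrightarrow> v * q w - p w \<le> v * q v - p v"
    and ir: "\<And>v. v \<in> {0..1} \<Longrightarrow> 0 \<le> v * q v - p v"
begin

lemma q_mono:
  assumes "a \<in> {0..1}" "b \<in> {0..1}" "a \<le> b"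
  shows "q a \<le> q b"
proof -
  have "0 \<le> (b - a) * (q b - q a)"
    using ic[OF assms(1,2)] ic[OF assms(2,1)] by (simp add: algebra_simps)
  then show ?thesis
    using assms by (cases "a = b") (auto simp: zero_le_mult_iff)
qed

definition upper_set :: "real \<Rightarrow> real set" where
  "upper_set t = {w \<in> {0..1}. t \<le> q w}"

text \<open>For empty \<^term>\<open>upper_set t\<close> this is the junk value \<^term>\<open>Inf {} :: real\<close>;
  the layer t is then empty, so its value never matters.\<close>
definition threshold :: "real \<Rightarrow> real" where
  "threshold t = Inf (upper_set t)"

lemma threshold_le: "w \<in> upper_set t \<Longrightarrow> threshold t \<le> w"
  unfolding threshold_def by (rule cInf_lower) (auto simp: upper_set_def bdd_below_def)

lemma threshold_nonneg: "upper_set t \<noteq> {} \<Longrightarrow> 0 \<le> threshold t"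
  unfolding threshold_def by (rule cInf_greatest) (auto simp: upper_set_def)

lemma le_threshold:
  assumes "a \<in> {0..1}" "q a < t" "upper_set t \<noteq> {}"
  shows "a \<le> threshold t"
  unfolding threshold_def
proof (rule cInf_greatest[OF assms(3)])
  fix w assume w: "w \<in> upper_set t"
  show "a \<le> w"
  proof (rule ccontr)
    assume "\<not> a \<le> w"
    then have "q w \<le> q a" using w assms(1) by (intro q_mono) (auto simp: upper_set_def)
    then show False using w assms(2) by (auto simp: upper_set_def)
  qed
qed

definition quantized :: "nat \<Rightarrow> real \<Rightarrow> real" where
  "quantized n v = (\<Sum>j=1..n. of_bool (real j / real n \<le> q v)) / real n"

definition layered_payment :: "nat \<Rightarrow> real \<Rightarrow> real" where
  "layered_payment n v =
    (\<Sum>j=1..n. threshold (real j / real n) * of_bool (real j / real n \<le> q v)) / real n"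

lemma quantized_approx:
  assumes "n > 0" "v \<in> {0..1}"
  shows "quantized n v \<le> q v" "q v - quantized n v \<le> 1 / real n"
proof -
  have "0 \<le> q v" "q v \<le> 1" using q_range[OF assms(2)] by auto
  then have "quantized n v = of_int \<lfloor>real n * q v\<rfloor> / real n"
    unfolding quantized_def by (simp only: sum_level_indicators)
  then have "real n * quantized n v = of_int \<lfloor>real n * q v\<rfloor>"
    using assms(1) by simp
  then have "real n * quantized n v \<le> real n * q v" "real n * q v - 1 < real n * quantized n v"
    using of_int_floor_le[of "real n * q v"] real_of_int_floor_gt_diff_one[of "real n * q v"]
    by linarith+
  then show "quantized n v \<le> q v" "q v - quantized n v \<le> 1 / real n"
    using assms(1) by (simp_all add: field_simps)
qed

lemma layered_payment_nonneg:
  assumes "v \<in> {0..1}"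
  shows "0 \<le> layered_payment n v"
  unfolding layered_payment_def
proof (intro divide_nonneg_nonneg sum_nonneg)
  fix j
  let ?t = "real j / real n"
  show "0 \<le> threshold ?t * of_bool (?t \<le> q v)"
  proof (cases "?t \<le> q v")
    case True
    then have "v \<in> upper_set ?t" using assms by (simp add: upper_set_def)
    then show ?thesis using True threshold_nonneg by auto
  qed simp
qed simp

lemma layered_payment_increment:
  assumes "a \<in> {0..1}" "b \<in> {0..1}" "a \<le> b"
  shows "a * (quantized n b - quantized n a) \<le> layered_payment n b - layered_payment n a"
proof -
  have layer: "a * (of_bool (t \<le> q b) - of_bool (t \<le> q a))
      \<le> threshold t * (of_bool (t \<le> q b) - of_bool (t \<le> q a))" for t
  proof (cases "t \<le> q a")
    case True
    then have "t \<le> q b" using q_mono[OF assms] by linarith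
    then show ?thesis using True by simp
  next
    case False
    show ?thesis
    proof (cases "t \<le> q b")
      case True
      then have "upper_set t \<noteq> {}" using assms(2) by (auto simp: upper_set_def)
      then have "a \<le> threshold t" using le_threshold assms(1) False by simp
      then show ?thesis using False True by simp
    qed (use False in simp)
  qed
  have "a * (quantized n b - quantized n a)
      = (\<Sum>j=1..n. a * (of_bool (real j / real n \<le> q b) - of_bool (real j / real n \<le> q a))) / real n"
    by (simp add: quantized_def sum_subtractf sum_distrib_left diff_divide_distrib right_diff_distrib
        del: sum_of_bool_eq)
  also have "\<dots> \<le> (\<Sum>j=1..n. threshold (real j / real n)
      * (of_bool (real j / real n \<le> q b) - of_bool (real j / real n \<le> q a))) / real n"
    by (intro divide_right_mono sum_mono layer) simp
  also have "\<dots> = layered_payment n b - layered_payment n a"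
    by (simp add: layered_payment_def sum_subtractf right_diff_distrib diff_divide_distrib)
  finally show ?thesis .
qed

lemma payment_le_layered_payment:
  assumes "n > 0" "v \<in> {0..1}"
  shows "p v \<le> layered_payment n v + 1 / real n"
proof -
  \<comment> \<open>The correction term makes the increments of D second order in the step length.\<close>
  define D where "D x = p x - layered_payment n x - x * (q x - quantized n x)" for x
  have D_increment: "D y - D x \<le> (y - x) * (q y - q x)"
    if xy: "x \<in> {0..1}" "y \<in> {0..1}" "x \<le> y" for x y
  proof -
    have "p y - p x \<le> y * q y - y * q x" using ic[of y x] xy by simp
    moreover have "x * quantized n y - x * quantized n x \<le> layered_payment n y - layered_payment n x"
      using layered_payment_increment[OF xy] by (simp add: right_diff_distrib)
    moreover have "(y - x) * quantized n y \<le> (y - x) * q y"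
      using quantized_approx(1)[OF assms(1) xy(2)] xy by (intro mult_left_mono) auto
    ultimately show ?thesis
      unfolding D_def left_diff_distrib right_diff_distrib by linarith
  qed
  have "D v \<le> D 0"
  proof (rule le_left_endpoint_if_increments_le[where D = D and q = q and C = 1])
    show "0 \<le> v" using assms(2) by simp
    show "\<bar>q x\<bar> \<le> 1" if "x \<in> {0..v}" for x
      using q_range[of x] that assms(2) by auto
    show "D y - D x \<le> (y - x) * (q y - q x)" if "x \<in> {0..v}" "y \<in> {0..v}" "x \<le> y" for x y
      using D_increment[of x y] that assms(2) by simp
  qed
  moreover have "D 0 \<le> 0"
    using ir[of 0] layered_payment_nonneg[of 0 n] by (simp add: D_def)
  moreover have "v * (q v - quantized n v) \<le> 1 * (1 / real n)"
    using quantized_approx[OF assms] assms(2) by (intro mult_mono) auto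
  ultimately show ?thesis by (simp add: D_def)
qed

lemma layer_integrable:
  fixes h :: "real \<Rightarrow> real"
  assumes "set_integrable lborel {0..1} h"
  shows "set_integrable lborel {0..1} (\<lambda>v. of_bool (t \<le> q v) * h v)"
proof -
  define q' where "q' v = q (max 0 (min 1 v))" for v
  have "mono q'" unfolding mono_def q'_def by (auto intro!: q_mono)
  then have [measurable]: "q' \<in> borel_measurable borel" by (rule borel_measurable_mono)
  have "{v. t \<le> q' v} \<in> sets lborel" by measurable
  from integrable_mult_indicator[OF this assms[unfolded set_integrable_def]]
  have "integrable lborel (\<lambda>v. indicator {v. t \<le> q' v} v *\<^sub>R (indicator {0..1} v *\<^sub>R h v))" .
  moreover have "(\<lambda>v. indicator {v. t \<le> q' v} v *\<^sub>R (indicator {0..1} v *\<^sub>R h v))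
      = (\<lambda>v. indicator {0..1} v *\<^sub>R (of_bool (t \<le> q v) * h v))"
    by (auto simp: fun_eq_iff q'_def indicator_def)
  ultimately show ?thesis unfolding set_integrable_def by simp
qed

lemma layered_payment_revenue:
  fixes h :: "real \<Rightarrow> real"
  assumes h_int: "set_integrable lborel {0..1} h"
  shows "set_integrable lborel {0..1} (\<lambda>v. layered_payment n v * h v)"
    and "(LINT v:{0..1}|lborel. layered_payment n v * h v) =
      (\<Sum>j=1..n. threshold (real j / real n)
        * (LINT v:{0..1}|lborel. of_bool (real j / real n \<le> q v) * h v)) / real n"
proof -
  have layers: "set_integrable lborel {0..1}
      (\<lambda>v. threshold (real j / real n) * (of_bool (real j / real n \<le> q v) * h v))" for j
    using layer_integrable[OF h_int] by simp
  have eq: "(\<lambda>v. layered_payment n v * h v) = (\<lambda>v. (\<Sum>j=1..n.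
      threshold (real j / real n) * (of_bool (real j / real n \<le> q v) * h v)) / real n)"
    by (rule ext) (simp only: layered_payment_def times_divide_eq_left sum_distrib_right mult.assoc)
  note layer_sum = set_integral_sum[where I = "{1..n}" and
      f = "\<lambda>j v. threshold (real j / real n) * (of_bool (real j / real n \<le> q v) * h v)", OF layers]
  show "set_integrable lborel {0..1} (\<lambda>v. layered_payment n v * h v)"
    and "(LINT v:{0..1}|lborel. layered_payment n v * h v) =
      (\<Sum>j=1..n. threshold (real j / real n)
        * (LINT v:{0..1}|lborel. of_bool (real j / real n \<le> q v) * h v)) / real n"
    unfolding eq using layer_sum by simp_all
qed

lemma layer_revenue_le:
  fixes h :: "real \<Rightarrow> real"
  assumes h_nonneg: "\<And>v. v \<in> {0..1} \<Longrightarrow> 0 \<le> h v"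
    and h_int: "set_integrable lborel {0..1} h"
    and tail_bound: "\<And>r. r \<in> {0..1} \<Longrightarrow> r * (LINT v:{r..1}|lborel. h v) \<le> M"
  shows "threshold t * (LINT v:{0..1}|lborel. of_bool (t \<le> q v) * h v) \<le> M"
proof (cases "upper_set t = {}")
  case True
  then have "(\<lambda>v. indicator {0..1} v *\<^sub>R (of_bool (t \<le> q v) * h v)) = (\<lambda>v. 0)"
    by (auto simp: fun_eq_iff indicator_def upper_set_def)
  then show ?thesis using tail_bound[of 0] by (simp add: set_lebesgue_integral_def)
next
  case False
  define r where "r = threshold t"
  have "0 \<le> r" using threshold_nonneg[OF False] by (simp add: r_def)
  have "r \<le> 1" using False threshold_le by (force simp: r_def upper_set_def)
  have "(LINT v:{0..1}|lborel. of_bool (t \<le> q v) * h v) \<le> (LINT v:{r..1}|lborel. h v)"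
    unfolding set_lebesgue_integral_def
  proof (rule integral_mono)
    show "integrable lborel (\<lambda>v. indicator {0..1} v *\<^sub>R (of_bool (t \<le> q v) * h v))"
      using layer_integrable[OF h_int] unfolding set_integrable_def .
    show "integrable lborel (\<lambda>v. indicator {r..1} v *\<^sub>R h v)"
      using set_integrable_subset[OF h_int, of "{r..1}"] \<open>0 \<le> r\<close>
      unfolding set_integrable_def by simp
    fix v
    show "indicator {0..1} v *\<^sub>R (of_bool (t \<le> q v) * h v) \<le> indicator {r..1} v *\<^sub>R h v"
    proof (cases "v \<in> upper_set t")
      case True
      then have "r \<le> v" "v \<in> {0..1}" "t \<le> q v" using threshold_le by (auto simp: r_def upper_set_def)
      then show ?thesis by (simp add: indicator_def)
    next
      case False
      then have "indicator {0..1} v *\<^sub>R (of_bool (t \<le> q v) * h v) = 0"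
        by (auto simp: upper_set_def indicator_def)
      moreover have "0 \<le> indicator {r..1} v *\<^sub>R h v"
        using h_nonneg \<open>0 \<le> r\<close> by (auto simp: indicator_def)
      ultimately show ?thesis by linarith
    qed
  qed
  then have "r * (LINT v:{0..1}|lborel. of_bool (t \<le> q v) * h v) \<le> r * (LINT v:{r..1}|lborel. h v)"
    using \<open>0 \<le> r\<close> by (rule mult_left_mono)
  also have "\<dots> \<le> M" using tail_bound \<open>0 \<le> r\<close> \<open>r \<le> 1\<close> by simp
  finally show ?thesis by (simp add: r_def)
qed

theorem revenue_le:
  fixes h :: "real \<Rightarrow> real"
  assumes h_nonneg: "\<And>v. v \<in> {0..1} \<Longrightarrow> 0 \<le> h v"
    and h_int: "set_integrable lborel {0..1} h"
    and tail_bound: "\<And>r. r \<in> {0..1} \<Longrightarrow> r * (LINT v:{r..1}|lborel. h v) \<le> M"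
  shows "(LINT v:{0..1}|lborel. p v * h v) \<le> M"
proof (cases "set_integrable lborel {0..1} (\<lambda>v. p v * h v)")
  case False
  then show ?thesis
    using tail_bound[of 0]
    by (simp add: set_lebesgue_integral_def set_integrable_def not_integrable_integral_eq)
next
  case True
  define H where "H = (LINT v:{0..1}|lborel. h v)"
  have "(LINT v:{0..1}|lborel. p v * h v) - M \<le> H / real n" if "n > 0" for n
  proof -
    let ?t = "\<lambda>j. real j / real n"
    have "p v * h v \<le> layered_payment n v * h v + h v / real n" if "v \<in> {0..1}" for v
      using mult_right_mono[OF payment_le_layered_payment[OF \<open>n > 0\<close> that] h_nonneg[OF that]]
      by (simp add: distrib_right)
    then have "(LINT v:{0..1}|lborel. p v * h v)
        \<le> (LINT v:{0..1}|lborel. layered_payment n v * h v + h v / real n)"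
      using True layered_payment_revenue(1)[OF h_int] h_int by (intro set_integral_mono) auto
    also have "\<dots> = (\<Sum>j=1..n. threshold (?t j)
        * (LINT v:{0..1}|lborel. of_bool (?t j \<le> q v) * h v)) / real n + H / real n"
      using layered_payment_revenue[OF h_int] h_int by (simp add: H_def)
    also have "\<dots> \<le> (\<Sum>j=1..n. M) / real n + H / real n"
      using layer_revenue_le[OF h_nonneg h_int tail_bound]
      by (intro add_right_mono divide_right_mono sum_mono) auto
    also have "\<dots> = M + H / real n" using that by simp
    finally show ?thesis by simp
  qed
  then have "(LINT v:{0..1}|lborel. p v * h v) - M \<le> 0"
    by (rule le_zero_if_le_const_over_nat)
  then show ?thesis by simp
qed

end

text \<open>Integrating the factorisation in one variable normalises each marginal.\<close>
lemma product_density_marginals: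
  fixes g :: "real \<times> real \<Rightarrow> real"
  assumes g_pos: "\<forall>x\<in>types. g x > 0"
    and g_prod: "\<forall>(v,k)\<in>types. g (v,k) = marg_v g v * marg_k g k"
  shows "\<And>v. v \<in> {0..1} \<Longrightarrow> 0 < marg_v g v"
    and "\<And>k. k \<in> {0<..1} \<Longrightarrow> 0 < marg_k g k"
    and "(LINT v:{0..1}|lborel. marg_v g v) = 1"
    and "(LINT k:{0<..1}|lborel. marg_k g k) = 1"
    and "set_integrable lborel {0..1} (marg_v g)"
    and "set_integrable lborel {0<..1} (marg_k g)"
proof -
  have nonneg_v: "0 \<le> marg_v g v" if "v \<in> {0..1}" for v
    unfolding marg_v_def set_lebesgue_integral_def using g_pos that
    by (intro integral_nonneg_AE AE_I2) (auto simp: indicator_def types_def less_imp_le)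
  have nonneg_k: "0 \<le> marg_k g k" if "k \<in> {0<..1}" for k
    unfolding marg_k_def set_lebesgue_integral_def using g_pos that
    by (intro integral_nonneg_AE AE_I2) (auto simp: indicator_def types_def less_imp_le)
  have product_pos: "0 < marg_v g v * marg_k g k" if "v \<in> {0..1}" "k \<in> {0<..1}" for v k
    using g_pos g_prod that by (auto simp: types_def)
  show pos_v: "0 < marg_v g v" if "v \<in> {0..1}" for v
    using product_pos[of v 1] nonneg_v[OF that] nonneg_k[of 1] that by (auto simp: zero_less_mult_iff)
  show pos_k: "0 < marg_k g k" if "k \<in> {0<..1}" for k
    using product_pos[of 0 k] nonneg_v[of 0] nonneg_k[OF that] that by (auto simp: zero_less_mult_iff)
  have "marg_k g 1 = (LINT v:{0..1}|lborel. g (v,1))" by (simp add: marg_k_def)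
  also have "\<dots> = (LINT v:{0..1}|lborel. marg_v g v) * marg_k g 1"
    using g_prod by (subst set_integral_mult_left[symmetric], intro set_lebesgue_integral_cong)
      (auto simp: types_def)
  finally show v_total: "(LINT v:{0..1}|lborel. marg_v g v) = 1"
    using pos_k[of 1] by simp
  have "marg_v g 0 = (LINT k:{0<..1}|lborel. g (0,k))" by (simp add: marg_v_def)
  also have "\<dots> = marg_v g 0 * (LINT k:{0<..1}|lborel. marg_k g k)"
    using g_prod by (subst set_integral_mult_right[symmetric], intro set_lebesgue_integral_cong)
      (auto simp: types_def)
  finally show k_total: "(LINT k:{0<..1}|lborel. marg_k g k) = 1"
    using pos_v[of 0] by simp
  show "set_integrable lborel {0..1} (marg_v g)" "set_integrable lborel {0<..1} (marg_k g)"
    using v_total k_total not_integrable_integral_eq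
    unfolding set_integrable_def set_lebesgue_integral_def by fastforce+
qed

lemma tail_eq_one_minus_cdf:
  fixes h :: "real \<Rightarrow> real"
  assumes "set_integrable lborel {0..1} h" "(LINT v:{0..1}|lborel. h v) = 1" "r \<in> {0..1}"
  shows "(LINT v:{r..1}|lborel. h v) = 1 - (LINT v:{0..r}|lborel. h v)"
proof -
  have "AE v in lborel. \<not> (v \<in> {0..r} \<and> v \<in> {r..1})"
    using AE_lborel_singleton[of r] by eventually_elim auto
  then have "(LINT v:{0..r} \<union> {r..1}|lborel. h v)
      = (LINT v:{0..r}|lborel. h v) + (LINT v:{r..1}|lborel. h v)"
    using assms(1,3) by (intro set_integral_Un_AE) (auto intro: set_integrable_subset)
  moreover have "{0..r} \<union> {r..1} = {0..1}" using assms(3) by auto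
  ultimately show ?thesis using assms(2) by simp
qed

lemma revenue_product_density:
  fixes g p :: "real \<times> real \<Rightarrow> real" and a b :: "real \<Rightarrow> real"
  assumes p_int: "set_integrable lborel types (\<lambda>x. p x * g x)"
    and g_prod: "\<forall>(v,k)\<in>types. g (v,k) = a v * b k"
  shows "revenue g p = (LINT k:{0<..1}|lborel. b k * (LINT v:{0..1}|lborel. p (v,k) * a v))"
    and "set_integrable lborel {0<..1} (\<lambda>k. b k * (LINT v:{0..1}|lborel. p (v,k) * a v))"
proof -
  define G where "G v k = indicator types (v,k) * (p (v,k) * g (v,k))" for v k
  have G_int: "integrable (lborel \<Otimes>\<^sub>M lborel) (case_prod G)"
    using p_int by (simp add: G_def set_integrable_def lborel_prod case_prod_beta')
  have slice: "(\<integral>v. G v k \<partial>lborel)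
      = indicator {0<..1} k * (b k * (LINT v:{0..1}|lborel. p (v,k) * a v))" for k
  proof (cases "k \<in> {0<..1}")
    case True
    then have "(\<integral>v. G v k \<partial>lborel) = (\<integral>v. b k * (indicator {0..1} v * (p (v,k) * a v)) \<partial>lborel)"
      using g_prod by (intro Bochner_Integration.integral_cong) (auto simp: G_def types_def indicator_def)
    then show ?thesis using True by (simp add: set_lebesgue_integral_def)
  qed (simp add: G_def types_def)
  have "revenue g p = integral\<^sup>L (lborel \<Otimes>\<^sub>M lborel) (case_prod G)"
    by (simp add: revenue_def set_lebesgue_integral_def G_def lborel_prod case_prod_beta')
  also have "\<dots> = (\<integral>k. (\<integral>v. G v k \<partial>lborel) \<partial>lborel)"
    using lborel_pair.integral_snd[OF G_int] by simp
  finally show "revenue g p = (LINT k:{0<..1}|lborel. b k * (LINT v:{0..1}|lborel. p (v,k) * a v))"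
    by (simp add: slice set_lebesgue_integral_def)
  show "set_integrable lborel {0<..1} (\<lambda>k. b k * (LINT v:{0..1}|lborel. p (v,k) * a v))"
    using lborel_pair.integrable_snd[OF G_int] by (simp add: slice set_integrable_def)
qed

lemma slice_ic_ir_mechanism:
  assumes "feasible f" "IC f p" "IR f p" "k \<in> {0<..1}"
  shows "ic_ir_mechanism (\<lambda>v. min (fst (f (v,k)) / k) (snd (f (v,k)))) (\<lambda>v. p (v,k))"
proof
  fix v w :: real
  assume v: "v \<in> {0..1}"
  then have types_v: "(v,k) \<in> types" using assms(4) by (simp add: types_def)
  then have "f (v,k) \<in> {0..1} \<times> {0..1}" using assms(1) unfolding feasible_def by blast
  then show "min (fst (f (v,k)) / k) (snd (f (v,k))) \<in> {0..1}"
    using assms(4) by (auto simp: mem_Times_iff min_le_iff_disj)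
  show "0 \<le> v * min (fst (f (v,k)) / k) (snd (f (v,k))) - p (v,k)"
    using assms(3) types_v unfolding IR_def util_def by fast
  assume "w \<in> {0..1}"
  then have "(w,k) \<in> types" using assms(4) by (simp add: types_def)
  then show "v * min (fst (f (w,k)) / k) (snd (f (w,k))) - p (w,k)
      \<le> v * min (fst (f (v,k)) / k) (snd (f (v,k))) - p (v,k)"
    using assms(2) types_v unfolding IC_def util_def by fast
qed

lemma posted_price_feasible: "feasible (\<lambda>(v,k). if v \<ge> price then (k, 1) else (0, 0))"
  by (auto simp: feasible_def types_def)

lemma posted_price_IC:
  "IC (\<lambda>(v,k). if v \<ge> price then (k, 1) else (0, 0)) (\<lambda>(v,k). if v \<ge> price then price else 0)"
  unfolding IC_def
proof (intro ballI, clarify)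
  fix v k v' k' assume "(v,k) \<in> types" "(v',k') \<in> types"
  then have "v * min (k' / k) 1 \<le> v" "0 \<le> v" "0 < k" by (auto simp: types_def mult_left_le)
  then show "util v k (fst (if price \<le> v' then (k', 1) else (0, 0)))
      (snd (if price \<le> v' then (k', 1) else (0, 0))) (if price \<le> v' then price else 0)
    \<le> util v k (fst (if price \<le> v then (k, 1) else (0, 0)))
      (snd (if price \<le> v then (k, 1) else (0, 0))) (if price \<le> v then price else 0)"
    by (auto simp: util_def)
qed

lemma posted_price_IR:
  "IR (\<lambda>(v,k). if v \<ge> price then (k, 1) else (0, 0)) (\<lambda>(v,k). if v \<ge> price then price else 0)"
  by (auto simp: IR_def types_def util_def)

lemma revenue_posted_price:
  fixes g :: "real \<times> real \<Rightarrow> real" and a b :: "real \<Rightarrow> real"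
  assumes g_int: "set_integrable lborel types g"
    and g_prod: "\<forall>(v,k)\<in>types. g (v,k) = a v * b k"
    and b_total: "(LINT k:{0<..1}|lborel. b k) = 1"
    and "0 \<le> price"
  shows "revenue g (\<lambda>(v,k). if v \<ge> price then price else 0) = price * (LINT v:{price..1}|lborel. a v)"
proof -
  have "{price..} \<times> UNIV \<in> sets (lborel \<Otimes>\<^sub>M (lborel :: real measure))"
    by (rule pair_measureI) auto
  then have "{price..} \<times> UNIV \<in> sets (lborel :: (real \<times> real) measure)"
    by (simp only: lborel_prod)
  from integrable_mult_indicator[OF this g_int[unfolded set_integrable_def]]
  have "set_integrable lborel types (\<lambda>x. price * (indicator ({price..} \<times> UNIV) x * g x))"
    unfolding set_integrable_def by (simp add: mult.left_commute)
  moreover have "(\<lambda>x. price * (indicator ({price..} \<times> UNIV) x * g x))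
      = (\<lambda>x. (case x of (v,k) \<Rightarrow> if v \<ge> price then price else 0) * g x)"
    by (auto simp: fun_eq_iff indicator_def)
  ultimately have p_int: "set_integrable lborel types
      (\<lambda>x. (case x of (v,k) \<Rightarrow> if v \<ge> price then price else 0) * g x)"
    by simp
  have "(LINT v:{0..1}|lborel. (if v \<ge> price then price else 0) * a v)
      = price * (LINT v:{price..1}|lborel. a v)"
    unfolding set_lebesgue_integral_def integral_mult_right_zero[symmetric]
    using \<open>0 \<le> price\<close> by (intro Bochner_Integration.integral_cong) (auto simp: indicator_def)
  then show ?thesis
    using revenue_product_density(1)[OF p_int g_prod] b_total by simp
qed

lemma revenue_le_if_slice_revenues_le:
  fixes g p :: "real \<times> real \<Rightarrow> real" and a b :: "real \<Rightarrow> real"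
  assumes p_int: "set_integrable lborel types (\<lambda>x. p x * g x)"
    and g_prod: "\<forall>(v,k)\<in>types. g (v,k) = a v * b k"
    and b_nonneg: "\<And>k. k \<in> {0<..1} \<Longrightarrow> 0 \<le> b k"
    and b_int: "set_integrable lborel {0<..1} b"
    and b_total: "(LINT k:{0<..1}|lborel. b k) = 1"
    and slice_le: "\<And>k. k \<in> {0<..1} \<Longrightarrow> (LINT v:{0..1}|lborel. p (v,k) * a v) \<le> M"
  shows "revenue g p \<le> M"
proof -
  have "revenue g p = (LINT k:{0<..1}|lborel. b k * (LINT v:{0..1}|lborel. p (v,k) * a v))"
    by (rule revenue_product_density(1)[OF p_int g_prod])
  also have "\<dots> \<le> (LINT k:{0<..1}|lborel. b k * M)"
    using revenue_product_density(2)[OF p_int g_prod] b_int b_nonneg slice_le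
    by (intro set_integral_mono) (auto intro: mult_left_mono)
  also have "\<dots> = M" using b_total by simp
  finally show ?thesis .
qed

theorem proposition4:
  fixes g :: "real \<times> real \<Rightarrow> real" and pstar :: real
  assumes g_meas: "g \<in> borel_measurable lborel"
    and g_pos: "\<forall>x\<in>types. g x > 0"
    and g_int: "set_integrable lborel types g"
    and g_one: "(LINT x:types|lborel. g x) = 1"
    and g_prod: "\<forall>(v,k)\<in>types. g (v,k) = marg_v g v * marg_k g k"
    and pstar_in: "pstar \<in> {0..1}"
    and pstar_max: "\<forall>q\<in>{0..1}. q * (1 - cdf_v g q) \<le> pstar * (1 - cdf_v g pstar)"
  shows "feasible (\<lambda>(v,k). if v \<ge> pstar then (k, 1) else (0, 0))
    \<and> IC (\<lambda>(v,k). if v \<ge> pstar then (k, 1) else (0, 0)) (\<lambda>(v,k). if v \<ge> pstar then pstar else 0)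
    \<and> IR (\<lambda>(v,k). if v \<ge> pstar then (k, 1) else (0, 0)) (\<lambda>(v,k). if v \<ge> pstar then pstar else 0)
    \<and> (\<forall>f p. feasible f \<and> IC f p \<and> IR f p \<and> set_integrable lborel types (\<lambda>x. p x * g x)
          \<longrightarrow> revenue g p \<le> revenue g (\<lambda>(v,k). if v \<ge> pstar then pstar else 0))"
proof -
  note marginals = product_density_marginals[OF g_pos g_prod]
  have tail: "(LINT v:{r..1}|lborel. marg_v g v) = 1 - cdf_v g r" if "r \<in> {0..1}" for r
    using tail_eq_one_minus_cdf[OF marginals(5,3) that] by (simp add: cdf_v_def)
  define M where "M = pstar * (1 - cdf_v g pstar)"
  have "revenue g (\<lambda>(v,k). if v \<ge> pstar then pstar else 0) = M"
    using revenue_posted_price[OF g_int g_prod marginals(4)] pstar_in tail[OF pstar_in]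
    by (simp add: M_def)
  moreover have "revenue g p \<le> M" if "feasible f" "IC f p" "IR f p"
    and "set_integrable lborel types (\<lambda>x. p x * g x)" for f p
  proof (rule revenue_le_if_slice_revenues_le[OF that(4) g_prod])
    show "(LINT v:{0..1}|lborel. p (v,k) * marg_v g v) \<le> M" if "k \<in> {0<..1}" for k
      using ic_ir_mechanism.revenue_le[OF slice_ic_ir_mechanism[OF \<open>feasible f\<close> \<open>IC f p\<close> \<open>IR f p\<close> that]]
        marginals(1,5) pstar_max tail
      by (simp add: M_def less_imp_le)
  qed (use marginals in \<open>auto intro: less_imp_le\<close>)
  ultimately show ?thesis
    using posted_price_feasible posted_price_IC posted_price_IR by auto
qed

end
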